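(* Let $L$ be a Lelek fan with top $v$ and let $W$ be a wedge in $L$. Then there is a retraction from $L$ onto $W$.
   Context: A continuum is a nonempty compact connected metric space. A dendroid is an arcwise connected, hereditarily unicoherent continuum. A point $x$ of a dendroid $X$ is a ramification point if $x$ is the top (the branch point) of some simple triod in $X$. A fan is a dendroid with at most one ramification point; this point, if it exists, is called the top of the fan. For a fan $X$, a point $x$ is an end point of $X$ if $x$ is an end point of every arc in $X$ containing $x$; $E(X)$ denotes the set of end points of $X$. A fan $X$ with top $v$ is smooth if for every $x\in X$ and every sequence $x_n\to x$ in $X$, the arcs from $v$ to $x_n$ converge (in the Hausdorff metric) to the arc from $v$ to $x$. A Lelek fan is a smooth fan $X$ with $\mathrm{Cl}(E(X))=X$. If $L$ is a Lelek fan with top $v$, a subcontinuum $W\subseteq L$ is a wedge in $L$ if both $W$ and $(L\setminus W)\cup\{v\}$ are Lelek fans. A retraction from a space $X$ onto a subspace $Y$ is a continuous map $r:X\to Y$ with $r(y)=y$ for all $y\in Y$. *)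

theory Defs
  imports "HOL-Analysis.Analysis"
begin

definition continuum :: "'a::metric_space set \<Rightarrow> bool" where
  "continuum X \<longleftrightarrow> X \<noteq> {} \<and> compact X \<and> connected X"

definition arc_from_to :: "'a::metric_space set \<Rightarrow> 'a \<Rightarrow> 'a \<Rightarrow> bool" where
  "arc_from_to A a b \<longleftrightarrow> (\<exists>g. arc g \<and> path_image g = A \<and> pathstart g = a \<and> pathfinish g = b)"

definition is_arc :: "'a::metric_space set \<Rightarrow> bool" where
  "is_arc A \<longleftrightarrow> (\<exists>a b. arc_from_to A a b)"

definition arc_endpoint :: "'a::metric_space \<Rightarrow> 'a set \<Rightarrow> bool" where
  "arc_endpoint x A \<longleftrightarrow> (\<exists>b. arc_from_to A x b)"

definition arcwise_connected :: "'a::metric_space set \<Rightarrow> bool" where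
  "arcwise_connected X \<longleftrightarrow>
     (\<forall>x\<in>X. \<forall>y\<in>X. x \<noteq> y \<longrightarrow> (\<exists>A. A \<subseteq> X \<and> arc_from_to A x y))"

definition hereditarily_unicoherent :: "'a::metric_space set \<Rightarrow> bool" where
  "hereditarily_unicoherent X \<longleftrightarrow>
     (\<forall>A B. A \<subseteq> X \<and> B \<subseteq> X \<and> continuum A \<and> continuum B \<longrightarrow> connected (A \<inter> B))"

definition dendroid :: "'a::metric_space set \<Rightarrow> bool" where
  "dendroid X \<longleftrightarrow> continuum X \<and> arcwise_connected X \<and> hereditarily_unicoherent X"

definition ramification_point :: "'a::metric_space set \<Rightarrow> 'a \<Rightarrow> bool" where
  "ramification_point X x \<longleftrightarrow>
     (\<exists>A1 A2 A3 a1 a2 a3. arc_from_to A1 x a1 \<and> arc_from_to A2 x a2 \<and> arc_from_to A3 x a3 \<and>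
        A1 \<union> A2 \<union> A3 \<subseteq> X \<and>
        A1 \<inter> A2 = {x} \<and> A1 \<inter> A3 = {x} \<and> A2 \<inter> A3 = {x})"

definition fan :: "'a::metric_space set \<Rightarrow> bool" where
  "fan X \<longleftrightarrow> dendroid X \<and> (\<forall>x y. ramification_point X x \<and> ramification_point X y \<longrightarrow> x = y)"

definition end_points :: "'a::metric_space set \<Rightarrow> 'a set" where
  "end_points X = {x\<in>X. \<forall>A. A \<subseteq> X \<and> is_arc A \<and> x \<in> A \<longrightarrow> arc_endpoint x A}"

definition arc_in :: "'a::metric_space set \<Rightarrow> 'a \<Rightarrow> 'a \<Rightarrow> 'a set" where
  "arc_in X a b = (if a = b then {a} else (THE A. A \<subseteq> X \<and> arc_from_to A a b))"

definition hausdorff_dist :: "'a::metric_space set \<Rightarrow> 'a set \<Rightarrow> real" where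
  "hausdorff_dist S T = max (SUP x\<in>S. setdist {x} T) (SUP y\<in>T. setdist {y} S)"

definition smooth_fan :: "'a::metric_space set \<Rightarrow> 'a \<Rightarrow> bool" where
  "smooth_fan X v \<longleftrightarrow> fan X \<and> ramification_point X v \<and>
     (\<forall>x\<in>X. \<forall>s. (\<forall>n. s n \<in> X) \<and> s \<longlonglongrightarrow> x \<longrightarrow>
        (\<lambda>n. hausdorff_dist (arc_in X v (s n)) (arc_in X v x)) \<longlonglongrightarrow> 0)"

definition lelek_fan :: "'a::metric_space set \<Rightarrow> 'a \<Rightarrow> bool" where
  "lelek_fan X v \<longleftrightarrow> smooth_fan X v \<and> closure (end_points X) = X"

definition is_lelek_fan :: "'a::metric_space set \<Rightarrow> bool" where
  "is_lelek_fan X \<longleftrightarrow> (\<exists>w. lelek_fan X w)"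

definition wedge :: "'a::metric_space set \<Rightarrow> 'a \<Rightarrow> 'a set \<Rightarrow> bool" where
  "wedge L v W \<longleftrightarrow> W \<subseteq> L \<and> continuum W \<and> is_lelek_fan W \<and> is_lelek_fan ((L - W) \<union> {v})"

end

theory Submission
  imports Defs
begin

text \<open>Write \<open>L = W \<union> M\<close> with \<open>M = (L - W) \<union> {v}\<close>. Both pieces are Lelek fans, hence compact and
  closed, and they meet at most in the top \<open>v\<close>. Since \<open>L\<close> is connected they must meet, so
  \<open>v \<in> W\<close>; the map that is the identity on \<open>W\<close> and collapses \<open>M\<close> to \<open>v\<close> is then continuous by
  pasting along the two closed pieces, and it is the required retraction.\<close>

lemma lelek_fan_continuum: "lelek_fan X v \<Longrightarrow> continuum X"
  by (simp add: lelek_fan_def smooth_fan_def fan_def dendroid_def)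

lemma is_lelek_fan_compact: "is_lelek_fan X \<Longrightarrow> compact X"
  by (auto simp: is_lelek_fan_def continuum_def dest: lelek_fan_continuum)

lemma lelek_fan_top_mem:
  assumes "lelek_fan X v"
  shows "v \<in> X"
proof -
  have "ramification_point X v"
    using assms by (simp add: lelek_fan_def smooth_fan_def)
  then obtain A a where "arc_from_to A v a" "A \<subseteq> X"
    unfolding ramification_point_def by blast
  then show ?thesis
    unfolding arc_from_to_def by auto
qed

lemma retraction_collapse_closed_Un:
  assumes "closed A" "closed B" "A \<inter> B \<subseteq> {p}" "p \<in> A"
  shows "retraction (A \<union> B) A (\<lambda>x. if x \<in> A then x else p)"
proof -
  have "continuous_on A (\<lambda>x. if x \<in> A then x else p)"
    by (rule continuous_on_eq[OF continuous_on_id]) auto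
  moreover have "continuous_on B (\<lambda>x. if x \<in> A then x else p)"
    by (rule continuous_on_eq[OF continuous_on_const[of _ p]]) (use assms(3) in auto)
  ultimately have "continuous_on (A \<union> B) (\<lambda>x. if x \<in> A then x else p)"
    using assms(1,2) by (rule continuous_on_closed_Un[rotated 2])
  then show ?thesis
    unfolding retraction_def using assms(4) by auto
qed

lemma wedge_decomposition:
  assumes "lelek_fan L v" "wedge L v W"
  shows "L = W \<union> ((L - W) \<union> {v})" "closed W" "closed ((L - W) \<union> {v})" "v \<in> W"
proof -
  let ?M = "(L - W) \<union> {v}"
  have "W \<subseteq> L" "continuum W" "is_lelek_fan ?M"
    using assms(2) unfolding wedge_def by auto
  then show L: "L = W \<union> ?M" and W: "closed W" and M: "closed ?M"
    using lelek_fan_top_mem[OF assms(1)]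
    by (auto simp: continuum_def compact_imp_closed is_lelek_fan_compact)
  have "W \<inter> ?M \<noteq> {}"
  proof (rule connected_as_closed_union[OF _ L W M])
    show "connected L" "W \<noteq> {}"
      using lelek_fan_continuum[OF assms(1)] \<open>continuum W\<close> by (auto simp: continuum_def)
  qed auto
  then show "v \<in> W"
    by auto
qed

theorem mainTheorem7:
  fixes L W :: "'a::metric_space set" and v :: 'a
  assumes "lelek_fan L v"
    and "wedge L v W"
  shows "\<exists>r. retraction L W r"
proof -
  note decomposition = wedge_decomposition[OF assms]
  have "retraction (W \<union> ((L - W) \<union> {v})) W (\<lambda>x. if x \<in> W then x else v)"
    by (rule retraction_collapse_closed_Un) (use decomposition in auto)
  then show ?thesis
    using decomposition(1) by auto
qed

end
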